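(* Let $k\ge 1$ and $n\ge 3$ be integers, let $0<\alpha<1$ be a real number, and let $G\in T_k(n)$. Then \[{}^0R_{\alpha}(G)\le k(n-1)^{\alpha}+2(k+1)^{\alpha}+(n-k-2)(k+2)^{\alpha},\] and equality holds if and only if $G=K_k+P_{n-k}$.
   Context: All graphs are finite, simple, undirected and connected. For a graph $G$ and real $\alpha\neq 0$, the zeroth-order general Randić index is ${}^0R_{\alpha}(G)=\sum_{v\in V(G)}d(v)^{\alpha}$, where $d(v)$ is the degree of $v$. A connected graph $G$ is a $k$-generalized quasi tree if there is a subset $V_k\subset V(G)$ with $|V_k|=k$ such that $G-V_k$ is a tree, but for every subset $V_{k-1}\subset V(G)$ with $|V_{k-1}|=k-1$, $G-V_{k-1}$ is not a tree. $T_k(n)$ denotes the class of $k$-generalized quasi trees of order $n$. For vertex-disjoint graphs $G,H$, the join $G+H$ has vertex set $V(G)\cup V(H)$ and edge set $E(G)\cup E(H)\cup\{uv: u\in V(G), v\in V(H)\}$. $K_k$ is the complete graph on $k$ vertices and $P_m$ is the path on $m$ vertices. *)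

theory Defs
  imports Main Complex_Main
begin

definition simple_graph :: "'a set \<Rightarrow> 'a set set \<Rightarrow> bool" where
  "simple_graph V E \<longleftrightarrow> finite V \<and> (\<forall>e\<in>E. \<exists>u v. u \<in> V \<and> v \<in> V \<and> u \<noteq> v \<and> e = {u, v})"

definition degree :: "'a set \<Rightarrow> 'a set set \<Rightarrow> 'a \<Rightarrow> nat" where
  "degree V E v = card {u \<in> V. {u, v} \<in> E}"

definition del_verts :: "'a set \<Rightarrow> 'a set set \<Rightarrow> 'a set \<Rightarrow> 'a set set" where
  "del_verts V E S = {e \<in> E. e \<inter> S = {}}"

definition connected_graph :: "'a set \<Rightarrow> 'a set set \<Rightarrow> bool" where
  "connected_graph V E \<longleftrightarrow> V \<noteq> {} \<and>
     (\<forall>u\<in>V. \<forall>v\<in>V. (\<lambda>x y. {x, y} \<in> E)\<^sup>*\<^sup>* u v)"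

definition has_cycle :: "'a set \<Rightarrow> 'a set set \<Rightarrow> bool" where
  "has_cycle V E \<longleftrightarrow> (\<exists>xs. length xs \<ge> 3 \<and> distinct xs \<and> set xs \<subseteq> V \<and>
     (\<forall>i < length xs. {xs ! i, xs ! ((i + 1) mod length xs)} \<in> E))"

definition is_tree :: "'a set \<Rightarrow> 'a set set \<Rightarrow> bool" where
  "is_tree V E \<longleftrightarrow> connected_graph V E \<and> \<not> has_cycle V E"

definition gen_quasi_tree :: "nat \<Rightarrow> 'a set \<Rightarrow> 'a set set \<Rightarrow> bool" where
  "gen_quasi_tree k V E \<longleftrightarrow> simple_graph V E \<and> connected_graph V E \<and>
     (\<exists>S. S \<subset> V \<and> card S = k \<and> is_tree (V - S) (del_verts V E S)) \<and>
     (\<forall>S. S \<subset> V \<and> card S = k - 1 \<longrightarrow> \<not> is_tree (V - S) (del_verts V E S))"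

definition randic0 :: "real \<Rightarrow> 'a set \<Rightarrow> 'a set set \<Rightarrow> real" where
  "randic0 \<alpha> V E = (\<Sum>v\<in>V. real (degree V E v) powr \<alpha>)"

definition complete_graph :: "nat \<Rightarrow> nat set \<times> nat set set" where
  "complete_graph k = ({0..<k}, {{i, j} | i j. i < k \<and> j < k \<and> i \<noteq> j})"

definition path_graph :: "nat \<Rightarrow> nat set \<times> nat set set" where
  "path_graph m = ({0..<m}, {{i, i + 1} | i. i + 1 < m})"

definition graph_join :: "'a set \<times> 'a set set \<Rightarrow> 'b set \<times> 'b set set \<Rightarrow> ('a + 'b) set \<times> ('a + 'b) set set" where
  "graph_join G H = (Inl ` fst G \<union> Inr ` fst H,
     ((`) Inl) ` snd G \<union> ((`) Inr) ` snd H \<union> {{Inl u, Inr v} | u v. u \<in> fst G \<and> v \<in> fst H})"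

definition graph_iso :: "'a set \<Rightarrow> 'a set set \<Rightarrow> 'b set \<times> 'b set set \<Rightarrow> bool" where
  "graph_iso V E H \<longleftrightarrow> (\<exists>f. bij_betw f V (fst H) \<and>
     (\<forall>u\<in>V. \<forall>v\<in>V. {u, v} \<in> E \<longleftrightarrow> {f u, f v} \<in> snd H))"

end

theory Submission
  imports Defs
begin

(* Delete a set S of k vertices leaving a tree T on m = n - k vertices; the minimality of k forces
   m >= 2, since deleting all vertices but the two ends of an edge also leaves a tree. A vertex of S
   has degree at most n - 1, and a vertex of T of tree degree d has degree at most d + k. As
   d |-> (d + k)^alpha is strictly concave, it lies below its secant through d = 1 and d = 2, strictly
   so for d >= 3; summing over T and using that the tree degrees add up to 2(m - 1) gives the bound.
   Equality forces every vertex of S to be adjacent to all others and T to have maximum degree 2,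
   i.e. T is a path and G = K_k + P_(n-k). *)

section \<open>Strictly concave sequences\<close>

lemma powr_increment_strict_decreasing:
  fixes x a :: real
  assumes "1 < x" "0 < a" "a < 1"
  shows "(x + 1) powr a - x powr a < x powr a - (x - 1) powr a"
proof -
  have deriv: "\<And>t. 0 < t \<Longrightarrow> ((\<lambda>z. z powr a) has_real_derivative a * t powr (a - 1)) (at t)"
    by (rule has_real_derivative_powr)
  obtain z1 where z1: "x < z1" "(x + 1) powr a - x powr a = a * z1 powr (a - 1)"
    using MVT2[of x "x + 1" "\<lambda>z. z powr a" "\<lambda>t. a * t powr (a - 1)"] deriv assms by force
  obtain z2 where z2: "x - 1 < z2" "z2 < x" "x powr a - (x - 1) powr a = a * z2 powr (a - 1)"
    using MVT2[of "x - 1" x "\<lambda>z. z powr a" "\<lambda>t. a * t powr (a - 1)"] deriv assms by force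
  have "z1 powr (a - 1) < z2 powr (a - 1)"
    using powr_less_mono2_neg[of "a - 1" z2 z1] z1 z2 assms by linarith
  then show ?thesis using z1 z2 assms by simp
qed

lemma concave_seq_increment_le:
  fixes f :: "nat \<Rightarrow> real"
  assumes concave: "\<And>n. 1 \<le> n \<Longrightarrow> f (n + 2) - f (n + 1) < f (n + 1) - f n" and "1 \<le> d"
  shows "f (d + 1) - f d \<le> f 2 - f 1 \<and> (2 \<le> d \<longrightarrow> f (d + 1) - f d < f 2 - f 1)"
  using \<open>1 \<le> d\<close>
proof (induction d rule: dec_induct)
  case base
  show ?case by (simp add: numeral_2_eq_2)
next
  case (step d)
  then show ?case using concave[of d] by (auto simp: add_ac)
qed

lemma concave_seq_le_secant:
  fixes f :: "nat \<Rightarrow> real"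
  assumes concave: "\<And>n. 1 \<le> n \<Longrightarrow> f (n + 2) - f (n + 1) < f (n + 1) - f n" and "1 \<le> d"
  shows "f d \<le> f 2 + (real d - 2) * (f 2 - f 1) \<and> (3 \<le> d \<longrightarrow> f d < f 2 + (real d - 2) * (f 2 - f 1))"
proof (cases "d = 1")
  case False
  then have "2 \<le> d" using \<open>1 \<le> d\<close> by simp
  then show ?thesis
  proof (induction d rule: dec_induct)
    case (step d)
    then show ?case
      using concave_seq_increment_le[OF concave, of d] by (auto simp: algebra_simps)
  qed simp
qed simp

lemma concave_seq_sum_le:
  fixes f :: "nat \<Rightarrow> real" and d :: "'v \<Rightarrow> nat"
  assumes concave: "\<And>n. 1 \<le> n \<Longrightarrow> f (n + 2) - f (n + 1) < f (n + 1) - f n"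
    and mono: "f 1 \<le> f 2" and "finite T" and "T \<noteq> {}"
    and pos: "\<And>v. v \<in> T \<Longrightarrow> 1 \<le> d v" and sum: "sum d T \<le> 2 * (card T - 1)"
  shows "(\<Sum>v\<in>T. f (d v)) \<le> 2 * f 1 + (real (card T) - 2) * f 2"
    and "v \<in> T \<Longrightarrow> 3 \<le> d v \<Longrightarrow> (\<Sum>v\<in>T. f (d v)) < 2 * f 1 + (real (card T) - 2) * f 2"
proof -
  let ?secant = "\<lambda>v. f 2 + (real (d v) - 2) * (f 2 - f 1)"
  have secant: "f (d v) \<le> ?secant v \<and> (3 \<le> d v \<longrightarrow> f (d v) < ?secant v)" if "v \<in> T" for v
    using concave_seq_le_secant[OF concave pos[OF that]] .
  have "sum ?secant T = real (card T) * f 2 + (real (sum d T) - 2 * real (card T)) * (f 2 - f 1)"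
    by (simp add: sum.distrib sum_subtractf of_nat_sum flip: sum_distrib_right)
  also have "\<dots> \<le> 2 * f 1 + (real (card T) - 2) * f 2"
  proof -
    have "1 \<le> card T" using \<open>T \<noteq> {}\<close> \<open>finite T\<close> by (simp add: Suc_le_eq card_gt_0_iff)
    then have "real (sum d T) \<le> 2 * (real (card T) - 1)"
      using of_nat_mono[OF sum, where ?'a = real] by (simp add: of_nat_diff)
    then have "(real (sum d T) - 2 * real (card T)) * (f 2 - f 1) \<le> -2 * (f 2 - f 1)"
      using mono by (intro mult_right_mono) auto
    then show ?thesis by (simp add: algebra_simps)
  qed
  finally have bound: "sum ?secant T \<le> 2 * f 1 + (real (card T) - 2) * f 2" .
  show "(\<Sum>v\<in>T. f (d v)) \<le> 2 * f 1 + (real (card T) - 2) * f 2"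
    using sum_mono[of T "\<lambda>v. f (d v)" ?secant] secant bound by fastforce
  show "(\<Sum>v\<in>T. f (d v)) < 2 * f 1 + (real (card T) - 2) * f 2" if "v \<in> T" "3 \<le> d v"
    using sum_strict_mono_ex1[OF \<open>finite T\<close>, of "\<lambda>v. f (d v)" ?secant] secant that bound by fastforce
qed

section \<open>Degrees in simple graphs\<close>

lemma simple_graph_finite: "simple_graph V E \<Longrightarrow> finite V"
  by (simp add: simple_graph_def)

lemma simple_graph_edgeE:
  assumes "simple_graph V E" "e \<in> E"
  obtains u v where "u \<in> V" "v \<in> V" "u \<noteq> v" "e = {u, v}"
  using assms unfolding simple_graph_def by blast

lemma simple_graph_edgeD:
  assumes "simple_graph V E" "{u, v} \<in> E"
  shows "u \<in> V" "v \<in> V" "u \<noteq> v"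
proof -
  obtain a b where "a \<in> V" "b \<in> V" "a \<noteq> b" "{u, v} = {a, b}"
    using assms by (rule simple_graph_edgeE)
  then show "u \<in> V" "v \<in> V" "u \<noteq> v" by (auto simp: doubleton_eq_iff)
qed

lemma simple_graph_no_loop: "simple_graph V E \<Longrightarrow> {v} \<notin> E"
  using simple_graph_edgeD[of V E v v] by auto

lemma simple_graph_del_verts:
  assumes "simple_graph V E"
  shows "simple_graph (V - S) (del_verts V E S)"
  unfolding simple_graph_def
proof (intro conjI ballI)
  show "finite (V - S)" using simple_graph_finite[OF assms] by blast
  fix e assume "e \<in> del_verts V E S"
  then have "e \<in> E" "e \<inter> S = {}" unfolding del_verts_def by auto
  then obtain u v where "u \<in> V" "v \<in> V" "u \<noteq> v" "e = {u, v}"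
    using assms simple_graph_edgeE by metis
  then show "\<exists>u v. u \<in> V - S \<and> v \<in> V - S \<and> u \<noteq> v \<and> e = {u, v}"
    using \<open>e \<inter> S = {}\<close> by blast
qed

lemma degree_del_verts: "v \<notin> S \<Longrightarrow> degree (V - S) (del_verts V E S) v = degree (V - S) E v"
  unfolding degree_def del_verts_def by (rule arg_cong[where f = card]) auto

lemma degree_le_card:
  assumes "simple_graph V E" "v \<in> V"
  shows "degree V E v \<le> card V - 1"
proof -
  have "{u \<in> V. {u, v} \<in> E} \<subseteq> V - {v}" using simple_graph_edgeD[OF assms(1)] by blast
  moreover have "finite V" using assms(1) by (rule simple_graph_finite)
  ultimately have "degree V E v \<le> card (V - {v})" unfolding degree_def by (intro card_mono) auto
  then show ?thesis using assms(2) \<open>finite V\<close> by simp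
qed

lemma degree_eq_card_imp_adjacent:
  assumes "simple_graph V E" "v \<in> V" "degree V E v = card V - 1" "u \<in> V" "u \<noteq> v"
  shows "{u, v} \<in> E"
proof -
  have sub: "{w \<in> V. {w, v} \<in> E} \<subseteq> V - {v}" using simple_graph_edgeD[OF assms(1)] by blast
  have "finite V" using assms(1) by (rule simple_graph_finite)
  then have "{w \<in> V. {w, v} \<in> E} = V - {v}"
    using assms(2,3) by (intro card_subset_eq[OF _ sub]) (auto simp: degree_def)
  then show ?thesis using assms(4,5) by blast
qed

lemma degree_le_degree_Diff:
  assumes "finite V" "S \<subseteq> V"
  shows "degree V E v \<le> degree (V - S) E v + card S"
proof -
  have "{u \<in> V. {u, v} \<in> E} \<subseteq> {u \<in> V - S. {u, v} \<in> E} \<union> S" by blast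
  then have "degree V E v \<le> card ({u \<in> V - S. {u, v} \<in> E} \<union> S)"
    unfolding degree_def using assms finite_subset by (intro card_mono) auto
  also have "\<dots> \<le> degree (V - S) E v + card S" unfolding degree_def by (rule card_Un_le)
  finally show ?thesis .
qed

lemma connected_graph_has_neighbour:
  assumes "simple_graph W F" "connected_graph W F" "v \<in> W" "u \<in> W" "u \<noteq> v"
  obtains w where "w \<in> W" "{v, w} \<in> F"
proof -
  have "(\<lambda>x y. {x, y} \<in> F)\<^sup>*\<^sup>* v u" using assms(2-4) unfolding connected_graph_def by blast
  then obtain w where "{v, w} \<in> F"
    using assms(5) by (cases rule: converse_rtranclpE) auto
  then show ?thesis using that simple_graph_edgeD[OF assms(1)] by blast
qed

lemma connected_graph_degree_pos:
  assumes "simple_graph W F" "connected_graph W F" "2 \<le> card W" "v \<in> W"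
  shows "1 \<le> degree W F v"
proof -
  have "finite W" using assms(1) by (rule simple_graph_finite)
  then have "card (W - {v}) \<ge> 1" using assms(3,4) by simp
  then have "W - {v} \<noteq> {}" using card_gt_0_iff by fastforce
  then obtain u where "u \<in> W" "u \<noteq> v" by blast
  then obtain w where "w \<in> W" "{v, w} \<in> F" using connected_graph_has_neighbour assms by metis
  then have "w \<in> {u \<in> W. {u, v} \<in> F}" by (simp add: insert_commute)
  then show ?thesis unfolding degree_def using \<open>finite W\<close> by (auto simp: Suc_le_eq card_gt_0_iff)
qed

section \<open>Longest paths in forests\<close>

definition is_path :: "'a set \<Rightarrow> 'a set set \<Rightarrow> 'a list \<Rightarrow> bool" where
  "is_path W F xs \<longleftrightarrow> distinct xs \<and> set xs \<subseteq> W \<and> (\<forall>i. Suc i < length xs \<longrightarrow> {xs ! i, xs ! Suc i} \<in> F)"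

lemma has_cycle_mono: "has_cycle W' F \<Longrightarrow> W' \<subseteq> W \<Longrightarrow> has_cycle W F"
  unfolding has_cycle_def by blast

lemma is_path_chord_has_cycle:
  assumes "is_path W F xs" "2 \<le> j" "j < length xs" "{xs ! 0, xs ! j} \<in> F"
  shows "has_cycle W F"
proof -
  let ?ys = "take (Suc j) xs"
  have "{?ys ! i, ?ys ! ((i + 1) mod length ?ys)} \<in> F" if "i < length ?ys" for i
  proof (cases "i = j")
    case True
    then show ?thesis using assms by (simp add: insert_commute)
  next
    case False
    then show ?thesis using assms that unfolding is_path_def by simp
  qed
  moreover have "distinct ?ys" "set ?ys \<subseteq> W"
    using assms(1) unfolding is_path_def by (auto dest: in_set_takeD)
  moreover have "3 \<le> length ?ys" using assms(2,3) by simp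
  ultimately show ?thesis unfolding has_cycle_def by blast
qed

lemma is_path_Cons:
  assumes "is_path W F xs" "xs \<noteq> []" "y \<in> W" "y \<notin> set xs" "{y, xs ! 0} \<in> F"
  shows "is_path W F (y # xs)"
  using assms unfolding is_path_def by (auto simp: nth_Cons split: nat.split)

lemma is_path_snoc:
  assumes "is_path W F xs" "xs \<noteq> []" "y \<in> W" "y \<notin> set xs" "{xs ! (length xs - 1), y} \<in> F"
  shows "is_path W F (xs @ [y])"
  unfolding is_path_def
proof (intro conjI allI impI)
  show "distinct (xs @ [y])" "set (xs @ [y]) \<subseteq> W" using assms unfolding is_path_def by auto
  fix i assume i: "Suc i < length (xs @ [y])"
  show "{(xs @ [y]) ! i, (xs @ [y]) ! Suc i} \<in> F"
  proof (cases "Suc i < length xs")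
    case True
    then show ?thesis using assms(1) unfolding is_path_def by (simp add: nth_append)
  next
    case False
    then have "Suc i = length xs" "i = length xs - 1" using i by simp_all
    then show ?thesis using assms(5) by (simp add: nth_append)
  qed
qed

lemma longest_path_exists:
  assumes "finite W" "w \<in> W"
  obtains xs where "is_path W F xs" "xs \<noteq> []" "\<And>ys. is_path W F ys \<Longrightarrow> length ys \<le> length xs"
proof -
  have single: "is_path W F [w]" using assms unfolding is_path_def by simp
  have "length ys < Suc (card W)" if "is_path W F ys" for ys
  proof -
    have "length ys = card (set ys)" "set ys \<subseteq> W"
      using that unfolding is_path_def by (auto simp: distinct_card)
    moreover have "card (set ys) \<le> card W" using card_mono[OF assms(1)] calculation(2) .
    ultimately show ?thesis by simp
  qed
  then obtain xs where "is_path W F xs" "\<forall>ys. is_path W F ys \<longrightarrow> length ys \<le> length xs"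
    using ex_has_greatest_nat[of "is_path W F" "[w]" length] single by blast
  moreover from this have "xs \<noteq> []" using single by fastforce
  ultimately show ?thesis using that by blast
qed

lemma longest_path_endpoint_neighbour_mem:
  assumes "is_path W F xs" "xs \<noteq> []" "\<And>ys. is_path W F ys \<Longrightarrow> length ys \<le> length xs"
    and "y \<in> W" "i = 0 \<or> Suc i = length xs" "{y, xs ! i} \<in> F"
  shows "y \<in> set xs"
proof (rule ccontr)
  assume "y \<notin> set xs"
  from assms(5) have "is_path W F (y # xs) \<or> is_path W F (xs @ [y])"
  proof
    assume "i = 0"
    then show ?thesis using is_path_Cons[OF assms(1,2,4) \<open>y \<notin> set xs\<close>] assms(6) by simp
  next
    assume "Suc i = length xs"
    then have "i = length xs - 1" by simp
    then have "{xs ! (length xs - 1), y} \<in> F" using assms(6) by (simp add: insert_commute)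
    then show ?thesis using is_path_snoc[OF assms(1,2,4) \<open>y \<notin> set xs\<close>] by simp
  qed
  then show False using assms(3) by fastforce
qed

lemma degree_ge_two_other_neighbour:
  assumes "finite W" "2 \<le> degree W F x"
  obtains y where "y \<in> W" "{y, x} \<in> F" "y \<noteq> z"
proof -
  have "\<not> {u \<in> W. {u, x} \<in> F} \<subseteq> {z}"
    using assms card_mono[of "{z}" "{u \<in> W. {u, x} \<in> F}"] unfolding degree_def by fastforce
  then show ?thesis using that by blast
qed

lemma acyclic_has_leaf:
  assumes "finite W" "W \<noteq> {}" "\<not> has_cycle W F" "\<And>v. {v} \<notin> F"
  obtains v where "v \<in> W" "degree W F v \<le> 1"
proof (rule ccontr)
  assume no_leaf: "\<not> thesis"
  obtain w where "w \<in> W" using assms(2) by blast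
  then obtain xs where xs: "is_path W F xs" "xs \<noteq> []" "\<And>ys. is_path W F ys \<Longrightarrow> length ys \<le> length xs"
    using longest_path_exists assms(1) by metis
  have "xs ! 0 \<in> W" using xs(1,2) unfolding is_path_def by auto
  then have "\<not> degree W F (xs ! 0) \<le> 1" using no_leaf that by blast
  then have "2 \<le> degree W F (xs ! 0)" by simp
  then obtain y where y: "y \<in> W" "{y, xs ! 0} \<in> F" "y \<noteq> xs ! 1"
    by (rule degree_ge_two_other_neighbour[OF assms(1)])
  then obtain j where j: "j < length xs" "xs ! j = y"
    using longest_path_endpoint_neighbour_mem[OF xs, of y 0] by (auto simp: in_set_conv_nth)
  have "j \<noteq> 0" using y j assms(4) by (metis insert_absorb2)
  with y j have "2 \<le> j" by (metis One_nat_def less_2_cases not_less)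
  then show False
    using is_path_chord_has_cycle[OF xs(1) _ j(1)] j y assms(3) by (simp add: insert_commute)
qed

lemma degree_Diff_singleton:
  assumes "finite W" "v \<in> W" "u \<noteq> v"
  shows "degree W F u = degree (W - {v}) F u + (if {v, u} \<in> F then 1 else 0)"
proof -
  have "{x \<in> W. {x, u} \<in> F} = {x \<in> W - {v}. {x, u} \<in> F} \<union> (if {v, u} \<in> F then {v} else {})"
    using assms(2) by auto
  then show ?thesis unfolding degree_def using assms(1) by (simp add: card_insert_if)
qed

lemma sum_adjacent_indicator:
  assumes "finite W" "{v} \<notin> F"
  shows "(\<Sum>u\<in>W - {v}. if {v, u} \<in> F then 1 else 0) = degree W F v"
proof -
  have "(\<Sum>u\<in>W - {v}. if {v, u} \<in> F then 1 else 0) = card {u \<in> W - {v}. {v, u} \<in> F}"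
    using assms(1) by (simp add: sum.If_cases Int_def conj_commute)
  also have "{u \<in> W - {v}. {v, u} \<in> F} = {u \<in> W. {u, v} \<in> F}"
    using assms(2) by (auto simp: insert_commute)
  finally show ?thesis unfolding degree_def .
qed

lemma acyclic_degree_sum_le:
  assumes "finite W" "W \<noteq> {}" "\<not> has_cycle W F" "\<And>v. {v} \<notin> F"
  shows "(\<Sum>v\<in>W. degree W F v) \<le> 2 * (card W - 1)"
  using assms
proof (induction "card W" arbitrary: W)
  case 0
  then show ?case by simp
next
  case (Suc c)
  obtain v where v: "v \<in> W" "degree W F v \<le> 1"
    using acyclic_has_leaf Suc.prems by blast
  show ?case
  proof (cases "W - {v} = {}")
    case True
    then have "W = {v}" using v by auto
    then show ?thesis using Suc.prems(4) by (simp add: degree_def)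
  next
    case False
    have card: "card (W - {v}) = c" using Suc.hyps(2) v by simp
    have "\<not> has_cycle (W - {v}) F" using Suc.prems(3) has_cycle_mono[of "W - {v}" F W] by blast
    then have IH: "(\<Sum>u\<in>W - {v}. degree (W - {v}) F u) \<le> 2 * (c - 1)"
      using Suc.hyps(1)[OF card[symmetric]] Suc.prems(1,4) False card by simp
    have "(\<Sum>u\<in>W. degree W F u) = degree W F v + (\<Sum>u\<in>W - {v}. degree W F u)"
      using Suc.prems(1) v by (simp add: sum.remove)
    also have "(\<Sum>u\<in>W - {v}. degree W F u)
        = (\<Sum>u\<in>W - {v}. degree (W - {v}) F u) + (\<Sum>u\<in>W - {v}. if {v, u} \<in> F then 1 else 0)"
      using degree_Diff_singleton[OF Suc.prems(1) v(1)] by (simp add: sum.distrib)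
    also have "(\<Sum>u\<in>W - {v}. if {v, u} \<in> F then 1 else 0) = degree W F v"
      using sum_adjacent_indicator Suc.prems(1,4) .
    finally have "(\<Sum>u\<in>W. degree W F u) = (\<Sum>u\<in>W - {v}. degree (W - {v}) F u) + 2 * degree W F v"
      by simp
    moreover have "c \<noteq> 0" using card False Suc.prems(1) by auto
    ultimately show ?thesis using IH v(2) Suc.hyps(2) by linarith
  qed
qed

lemma path_interior_neighbour:
  assumes "is_path W F xs" "finite W" "0 < i" "Suc i < length xs" "degree W F (xs ! i) \<le> 2"
    and "y \<in> W" "{y, xs ! i} \<in> F"
  shows "y = xs ! (i - 1) \<or> y = xs ! Suc i"
proof -
  let ?N = "{u \<in> W. {u, xs ! i} \<in> F}"
  have "xs ! (i - 1) \<in> ?N" "xs ! Suc i \<in> ?N"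
    using assms(1,3,4) unfolding is_path_def
    by (auto simp: insert_commute dest: spec[of _ "i - 1"] spec[of _ i])
  moreover have "xs ! (i - 1) \<noteq> xs ! Suc i"
    using assms(1,3,4) unfolding is_path_def by (simp add: nth_eq_iff_index_eq)
  moreover have "finite ?N" using assms(2) by simp
  ultimately have "{xs ! (i - 1), xs ! Suc i} = ?N"
    using card_mono[of ?N "{xs ! (i - 1), xs ! Suc i}"] assms(5) unfolding degree_def
    by (intro card_subset_eq) auto
  then show ?thesis using assms(6,7) by blast
qed

lemma longest_path_neighbour_mem:
  assumes "is_path W F xs" "xs \<noteq> []" "\<And>ys. is_path W F ys \<Longrightarrow> length ys \<le> length xs"
    and "finite W" "\<And>v. v \<in> W \<Longrightarrow> degree W F v \<le> 2"
    and "i < length xs" "y \<in> W" "{y, xs ! i} \<in> F"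
  shows "y \<in> set xs"
proof (cases "i = 0 \<or> Suc i = length xs")
  case True
  show ?thesis by (rule longest_path_endpoint_neighbour_mem[OF assms(1-3,7) True assms(8)])
next
  case False
  have "xs ! i \<in> W" using assms(1,6) unfolding is_path_def by auto
  then have "y = xs ! (i - 1) \<or> y = xs ! Suc i"
    using path_interior_neighbour[OF assms(1,4)] False assms(5-8) by simp
  then show ?thesis using False assms(6) by auto
qed

lemma acyclic_path_chord:
  assumes "is_path W F xs" "finite W" "\<not> has_cycle W F" "\<And>v. v \<in> W \<Longrightarrow> degree W F v \<le> 2"
    and "i < j" "j < length xs" "{xs ! i, xs ! j} \<in> F"
  shows "j = Suc i"
proof (rule ccontr)
  assume "j \<noteq> Suc i"
  with assms(5) have "Suc i < j" by simp
  show False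
  proof (cases "i = 0")
    case True
    then have "2 \<le> j" using \<open>Suc i < j\<close> by simp
    then show False using is_path_chord_has_cycle[OF assms(1) _ assms(6)] True assms(3,7) by simp
  next
    case False
    have "xs ! i \<in> W" "xs ! j \<in> W" using assms(1,5,6) unfolding is_path_def by auto
    then have "xs ! j = xs ! (i - 1) \<or> xs ! j = xs ! Suc i"
      using path_interior_neighbour[OF assms(1,2)] False \<open>Suc i < j\<close> assms(4,6,7)
      by (simp add: insert_commute)
    then show False
      using assms(1,6) \<open>Suc i < j\<close> unfolding is_path_def by (auto simp: nth_eq_iff_index_eq)
  qed
qed

lemma tree_max_degree_two_path:
  assumes "simple_graph W F" "is_tree W F" "\<And>v. v \<in> W \<Longrightarrow> degree W F v \<le> 2"
  obtains xs where "distinct xs" "set xs = W"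
    "\<And>i j. i < length xs \<Longrightarrow> j < length xs \<Longrightarrow> {xs ! i, xs ! j} \<in> F \<longleftrightarrow> i = Suc j \<or> j = Suc i"
proof -
  have fin: "finite W" by (rule simple_graph_finite[OF assms(1)])
  have conn: "connected_graph W F" and acyc: "\<not> has_cycle W F"
    using assms(2) unfolding is_tree_def by auto
  obtain w where "w \<in> W" using conn unfolding connected_graph_def by blast
  then obtain xs where xs: "is_path W F xs" "xs \<noteq> []" "\<And>ys. is_path W F ys \<Longrightarrow> length ys \<le> length xs"
    using longest_path_exists fin by metis
  have "(\<lambda>x y. {x, y} \<in> F)\<^sup>*\<^sup>* (xs ! 0) v \<Longrightarrow> v \<in> set xs" for v
  proof (induction rule: rtranclp_induct)
    case base
    then show ?case using xs(2) by simp
  next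
    case (step x y)
    then obtain i where "i < length xs" "x = xs ! i" by (auto simp: in_set_conv_nth)
    then show ?case
      using longest_path_neighbour_mem[OF xs fin assms(3)] step(2) simple_graph_edgeD[OF assms(1)]
      by (metis insert_commute)
  qed
  moreover have "xs ! 0 \<in> W" using xs(1,2) unfolding is_path_def by auto
  ultimately have "set xs = W"
    using conn xs(1) unfolding connected_graph_def is_path_def by blast
  moreover have "{xs ! i, xs ! j} \<in> F \<longleftrightarrow> i = Suc j \<or> j = Suc i"
    if "i < length xs" "j < length xs" for i j
  proof
    assume edge: "{xs ! i, xs ! j} \<in> F"
    then have "i \<noteq> j" using simple_graph_no_loop[OF assms(1)] by auto
    then show "i = Suc j \<or> j = Suc i"
      using acyclic_path_chord[OF xs(1) fin acyc assms(3)] that edge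
      by (metis insert_commute linorder_neq_iff)
  next
    assume "i = Suc j \<or> j = Suc i"
    then show "{xs ! i, xs ! j} \<in> F"
      using xs(1) that unfolding is_path_def by (auto simp: insert_commute)
  qed
  ultimately show ?thesis using that xs(1) unfolding is_path_def by blast
qed

section \<open>The join of a clique and a path\<close>

abbreviation clique_join_path :: "nat \<Rightarrow> nat \<Rightarrow> (nat + nat) set \<times> (nat + nat) set set" where
  "clique_join_path k m \<equiv> graph_join (complete_graph k) (path_graph m)"

lemma clique_join_path_vertices: "fst (clique_join_path k m) = Inl ` {0..<k} \<union> Inr ` {0..<m}"
  unfolding graph_join_def complete_graph_def path_graph_def by simp

lemma clique_join_path_edges: "snd (clique_join_path k m) =
    (`) Inl ` {{i, j} | i j. i < k \<and> j < k \<and> i \<noteq> j} \<union> (`) Inr ` {{i, i + 1} | i. i + 1 < m}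
    \<union> {{Inl u, Inr v} | u v. u \<in> {0..<k} \<and> v \<in> {0..<m}}"
  unfolding graph_join_def complete_graph_def path_graph_def by simp

lemma image_doubleton_mem_iff: "inj f \<Longrightarrow> {f a, f b} \<in> (`) f ` C \<longleftrightarrow> {a, b} \<in> C"
  using inj_image_mem_iff[of "(`) f" "{a, b}" C] inj_on_image[of f UNIV] by simp

lemma clique_join_path_edge_Inl_Inl:
  "{Inl a, Inl b} \<in> snd (clique_join_path k m) \<longleftrightarrow> a < k \<and> b < k \<and> a \<noteq> b"
proof -
  have "{Inl a, Inl b} \<in> snd (clique_join_path k m) \<longleftrightarrow>
      {Inl a, Inl b} \<in> (`) (Inl :: nat \<Rightarrow> nat + nat) ` {{i, j} | i j. i < k \<and> j < k \<and> i \<noteq> j}"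
  proof -
    have other_side: "{Inl a, Inl b} \<notin> (`) Inr ` C" for C :: "nat set set" by auto
    have cross: "{Inl a, Inl b} \<notin> {{Inl u, Inr v} | u v. u \<in> {0..<k} \<and> v \<in> {0..<m}}"
      by (auto simp: doubleton_eq_iff)
    show ?thesis by (simp only: clique_join_path_edges Un_iff other_side cross simp_thms refl)
  qed
  also have "\<dots> \<longleftrightarrow> a < k \<and> b < k \<and> a \<noteq> b"
    by (auto simp: image_doubleton_mem_iff doubleton_eq_iff)
  finally show ?thesis .
qed

lemma clique_join_path_edge_Inr_Inr:
  "{Inr a, Inr b} \<in> snd (clique_join_path k m) \<longleftrightarrow> a < m \<and> b < m \<and> (a = Suc b \<or> b = Suc a)"
proof -
  have "{Inr a, Inr b} \<in> snd (clique_join_path k m) \<longleftrightarrow>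
      {Inr a, Inr b} \<in> (`) (Inr :: nat \<Rightarrow> nat + nat) ` {{i, i + 1} | i. i + 1 < m}"
  proof -
    have other_side: "{Inr a, Inr b} \<notin> (`) Inl ` C" for C :: "nat set set" by auto
    have cross: "{Inr a, Inr b} \<notin> {{Inl u, Inr v} | u v. u \<in> {0..<k} \<and> v \<in> {0..<m}}"
      by (auto simp: doubleton_eq_iff)
    show ?thesis by (simp only: clique_join_path_edges Un_iff other_side cross simp_thms refl)
  qed
  also have "\<dots> \<longleftrightarrow> a < m \<and> b < m \<and> (a = Suc b \<or> b = Suc a)"
    by (auto simp: image_doubleton_mem_iff doubleton_eq_iff)
  finally show ?thesis .
qed

lemma clique_join_path_edge_Inl_Inr:
  "{Inl a, Inr b} \<in> snd (clique_join_path k m) \<longleftrightarrow> a < k \<and> b < m"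
  "{Inr b, Inl a} \<in> snd (clique_join_path k m) \<longleftrightarrow> a < k \<and> b < m"
  unfolding clique_join_path_edges by (auto simp: doubleton_eq_iff)

lemma clique_join_path_degree_Inl:
  assumes "a < k"
  shows "degree (fst (clique_join_path k m)) (snd (clique_join_path k m)) (Inl a) = k - 1 + m"
proof -
  have "{u \<in> fst (clique_join_path k m). {u, Inl a} \<in> snd (clique_join_path k m)}
      = Inl ` ({0..<k} - {a}) \<union> Inr ` {0..<m}"
  proof (rule set_eqI)
    fix u :: "nat + nat"
    show "u \<in> {u \<in> fst (clique_join_path k m). {u, Inl a} \<in> snd (clique_join_path k m)}
        \<longleftrightarrow> u \<in> Inl ` ({0..<k} - {a}) \<union> Inr ` {0..<m}"
      using assms by (cases u)
        (auto simp: clique_join_path_vertices clique_join_path_edge_Inl_Inl clique_join_path_edge_Inl_Inr)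
  qed
  moreover have "card (Inl ` ({0..<k} - {a}) \<union> (Inr ` {0..<m} :: (nat + nat) set)) = k - 1 + m"
    using assms by (subst card_Un_disjoint) (auto simp: card_image)
  ultimately show ?thesis unfolding degree_def by simp
qed

lemma path_neighbour_count:
  assumes "2 \<le> m" "b < m"
  shows "card {c. c < m \<and> (c = Suc b \<or> b = Suc c)} = (if b = 0 \<or> b = m - 1 then 1 else 2)"
proof -
  have "{c. c < m \<and> (c = Suc b \<or> b = Suc c)} =
      (if b = 0 then {1} else if b = m - 1 then {b - 1} else {b - 1, Suc b})"
    using assms by auto
  then show ?thesis by simp
qed

lemma clique_join_path_degree_Inr:
  assumes "2 \<le> m" "b < m"
  shows "degree (fst (clique_join_path k m)) (snd (clique_join_path k m)) (Inr b)
      = k + (if b = 0 \<or> b = m - 1 then 1 else 2)"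
proof -
  let ?P = "{c. c < m \<and> (c = Suc b \<or> b = Suc c)}"
  have "{u \<in> fst (clique_join_path k m). {u, Inr b} \<in> snd (clique_join_path k m)}
      = Inl ` {0..<k} \<union> Inr ` ?P"
  proof (rule set_eqI)
    fix u :: "nat + nat"
    show "u \<in> {u \<in> fst (clique_join_path k m). {u, Inr b} \<in> snd (clique_join_path k m)}
        \<longleftrightarrow> u \<in> Inl ` {0..<k} \<union> Inr ` ?P"
      using assms by (cases u)
        (auto simp: clique_join_path_vertices clique_join_path_edge_Inl_Inr clique_join_path_edge_Inr_Inr)
  qed
  moreover have "card (Inl ` {0..<k} \<union> (Inr ` ?P :: (nat + nat) set)) = k + card ?P"
    by (subst card_Un_disjoint) (auto simp: card_image)
  ultimately show ?thesis unfolding degree_def using path_neighbour_count[OF assms] by simp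
qed

definition extremal_randic0 :: "nat \<Rightarrow> nat \<Rightarrow> real \<Rightarrow> real" where
  "extremal_randic0 k n \<alpha> = real k * real (n - 1) powr \<alpha> + 2 * real (k + 1) powr \<alpha>
    + (real n - real k - 2) * real (k + 2) powr \<alpha>"

lemma randic0_clique_join_path:
  assumes "1 \<le> k" "2 \<le> m"
  shows "randic0 \<alpha> (fst (clique_join_path k m)) (snd (clique_join_path k m)) = extremal_randic0 k (k + m) \<alpha>"
proof -
  let ?deg = "degree (fst (clique_join_path k m)) (snd (clique_join_path k m))"
  have "randic0 \<alpha> (fst (clique_join_path k m)) (snd (clique_join_path k m))
      = (\<Sum>a\<in>{0..<k}. real (?deg (Inl a)) powr \<alpha>) + (\<Sum>b\<in>{0..<m}. real (?deg (Inr b)) powr \<alpha>)"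
    unfolding randic0_def clique_join_path_vertices
    by (subst sum.union_disjoint) (auto simp: sum.reindex)
  also have "(\<Sum>a\<in>{0..<k}. real (?deg (Inl a)) powr \<alpha>) = real k * real (k - 1 + m) powr \<alpha>"
    using assms(1) by (simp add: clique_join_path_degree_Inl of_nat_diff)
  also have "(\<Sum>b\<in>{0..<m}. real (?deg (Inr b)) powr \<alpha>)
      = (\<Sum>b\<in>{0, m - 1} \<union> {1..<m - 1}. real (k + (if b = 0 \<or> b = m - 1 then 1 else 2)) powr \<alpha>)"
  proof (rule sum.cong)
    show "{0..<m} = {0, m - 1} \<union> {1..<m - 1}" using assms(2) by auto
  next
    fix b assume "b \<in> {0, m - 1} \<union> {1..<m - 1}"
    then show "real (?deg (Inr b)) powr \<alpha> = real (k + (if b = 0 \<or> b = m - 1 then 1 else 2)) powr \<alpha>"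
      using assms(2) clique_join_path_degree_Inr[OF assms(2), of b k] by (auto simp: add.commute)
  qed
  also have "\<dots> = 2 * real (k + 1) powr \<alpha> + (real m - 2) * real (k + 2) powr \<alpha>"
    using assms(2) by (subst sum.union_disjoint) (auto simp: of_nat_diff)
  finally show ?thesis unfolding extremal_randic0_def using assms(1) by (simp add: add.commute)
qed

lemma randic0_graph_iso:
  assumes "graph_iso V E H"
  shows "randic0 \<alpha> V E = randic0 \<alpha> (fst H) (snd H)"
proof -
  obtain f where f: "bij_betw f V (fst H)" "\<forall>u\<in>V. \<forall>v\<in>V. {u, v} \<in> E \<longleftrightarrow> {f u, f v} \<in> snd H"
    using assms unfolding graph_iso_def by blast
  have degree_eq: "degree (fst H) (snd H) (f v) = degree V E v" if "v \<in> V" for v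
  proof -
    have "{w \<in> fst H. {w, f v} \<in> snd H} = f ` {u \<in> V. {u, v} \<in> E}"
      using f(2) that by (auto simp: bij_betw_imp_surj_on[OF f(1), symmetric])
    moreover have "inj_on f {u \<in> V. {u, v} \<in> E}"
      using f(1) by (auto simp: bij_betw_def intro: inj_on_subset)
    ultimately show ?thesis unfolding degree_def by (simp add: card_image)
  qed
  have "randic0 \<alpha> (fst H) (snd H) = (\<Sum>v\<in>V. real (degree (fst H) (snd H) (f v)) powr \<alpha>)"
    unfolding randic0_def by (rule sum.reindex_bij_betw[OF f(1), symmetric])
  then show ?thesis unfolding randic0_def using degree_eq by simp
qed

lemma bij_betw_Inl_Inr_combine:
  assumes "bij_betw h S A" "bij_betw g T B" "S \<inter> T = {}"
  shows "bij_betw (\<lambda>v. if v \<in> S then Inl (h v) else Inr (g v)) (S \<union> T) (Inl ` A \<union> Inr ` B)"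
proof (rule bij_betw_combine)
  have "bij_betw (Inl \<circ> h) S (Inl ` A)" by (rule bij_betw_trans[OF assms(1)]) (simp add: bij_betw_imageI)
  then show "bij_betw (\<lambda>v. if v \<in> S then Inl (h v) else Inr (g v)) S (Inl ` A)"
    by (rule bij_betw_cong[THEN iffD1, rotated]) simp
  have "bij_betw (Inr \<circ> g) T (Inr ` B)" by (rule bij_betw_trans[OF assms(2)]) (simp add: bij_betw_imageI)
  then show "bij_betw (\<lambda>v. if v \<in> S then Inl (h v) else Inr (g v)) T (Inr ` B)"
    by (rule bij_betw_cong[THEN iffD1, rotated]) (use assms(3) in auto)
qed auto

lemma graph_iso_clique_join_path:
  assumes "finite V" "S \<subseteq> V" "card S = k" "distinct xs" "set xs = V - S"
    and path: "\<And>i j. i < length xs \<Longrightarrow> j < length xs \<Longrightarrow> {xs ! i, xs ! j} \<in> E \<longleftrightarrow> i = Suc j \<or> j = Suc i"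
    and clique: "\<And>s u. s \<in> S \<Longrightarrow> u \<in> V \<Longrightarrow> u \<noteq> s \<Longrightarrow> {u, s} \<in> E"
    and no_loop: "\<And>v. {v} \<notin> E"
  shows "graph_iso V E (clique_join_path k (length xs))"
proof -
  obtain h where h: "bij_betw h S {0..<k}"
    using ex_bij_betw_finite_nat[of S] assms(1-3) finite_subset by blast
  define g where "g = inv_into {..<length xs} (nth xs)"
  have g: "bij_betw g (set xs) {0..<length xs}"
    unfolding g_def lessThan_atLeast0[symmetric] by (rule bij_betw_inv_into[OF bij_betw_nth[OF assms(4) refl refl]])
  have nth_g: "xs ! g v = v" if "v \<in> set xs" for v
    using that bij_betw_nth[OF assms(4) refl refl] unfolding g_def by (simp add: bij_betw_def f_inv_into_f)
  define f where "f v = (if v \<in> S then Inl (h v) else Inr (g v))" for v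
  have "bij_betw f (S \<union> (V - S)) (Inl ` {0..<k} \<union> Inr ` {0..<length xs})"
    unfolding f_def[abs_def] using g assms(5) by (intro bij_betw_Inl_Inr_combine[OF h]) auto
  then have "bij_betw f V (fst (clique_join_path k (length xs)))"
    using assms(2) by (simp add: clique_join_path_vertices Un_absorb1)
  moreover have "{u, v} \<in> E \<longleftrightarrow> {f u, f v} \<in> snd (clique_join_path k (length xs))"
    if "u \<in> V" "v \<in> V" for u v
  proof -
    have hS: "h w < k" "h w = h w' \<longleftrightarrow> w = w'" if "w \<in> S" "w' \<in> S" for w w'
      using h that by (auto simp: bij_betw_def inj_on_eq_iff)
    have gT: "g w < length xs" if "w \<in> set xs" for w
      using g that by (auto simp: bij_betw_def)
    consider "u \<in> S" "v \<in> S" | "u \<in> S" "v \<notin> S" | "u \<notin> S" "v \<in> S" | "u \<notin> S" "v \<notin> S" by blast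
    then show ?thesis
    proof cases
      case 1
      then show ?thesis using that clique[of v u] no_loop hS[of u v] hS[of v u]
        by (auto simp: f_def clique_join_path_edge_Inl_Inl)
    next
      case 2
      then show ?thesis using clique[of u v] hS gT assms(5) that
        by (auto simp: f_def clique_join_path_edge_Inl_Inr insert_commute)
    next
      case 3
      then show ?thesis using clique[of v u] hS gT assms(5) that by (auto simp: f_def clique_join_path_edge_Inl_Inr)
    next
      case 4
      then have "u \<in> set xs" "v \<in> set xs" using assms(5) that by auto
      then show ?thesis using 4 path[of "g u" "g v"] nth_g gT by (simp add: f_def clique_join_path_edge_Inr_Inr)
    qed
  qed
  ultimately show ?thesis unfolding graph_iso_def by blast
qed

section \<open>Vertex deletions leaving a tree\<close>

lemma sum_degree_powr_le:
  assumes "simple_graph V E" "S \<subseteq> V" "0 < \<alpha>"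
  shows "(\<Sum>s\<in>S. real (degree V E s) powr \<alpha>) \<le> real (card S) * real (card V - 1) powr \<alpha>"
    and "s \<in> S \<Longrightarrow> degree V E s < card V - 1 \<Longrightarrow>
      (\<Sum>s\<in>S. real (degree V E s) powr \<alpha>) < real (card S) * real (card V - 1) powr \<alpha>"
proof -
  have fin: "finite S" using simple_graph_finite[OF assms(1)] assms(2) finite_subset by blast
  have le: "\<forall>s\<in>S. real (degree V E s) powr \<alpha> \<le> real (card V - 1) powr \<alpha>"
    using degree_le_card[OF assms(1)] assms(2,3) by (auto intro!: powr_mono2)
  then show "(\<Sum>s\<in>S. real (degree V E s) powr \<alpha>) \<le> real (card S) * real (card V - 1) powr \<alpha>"
    using sum_mono[of S _ "\<lambda>_. real (card V - 1) powr \<alpha>"] by simp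
  assume "s \<in> S" "degree V E s < card V - 1"
  then have "real (degree V E s) powr \<alpha> < real (card V - 1) powr \<alpha>"
    using assms(3) by (intro powr_less_mono2) simp_all
  with \<open>s \<in> S\<close> have "\<exists>s\<in>S. real (degree V E s) powr \<alpha> < real (card V - 1) powr \<alpha>" by blast
  from sum_strict_mono_ex1[OF fin le this]
  show "(\<Sum>s\<in>S. real (degree V E s) powr \<alpha>) < real (card S) * real (card V - 1) powr \<alpha>"
    by simp
qed

lemma sum_degree_powr_deletion_tree_le:
  assumes G: "simple_graph V E" and "S \<subseteq> V" "card S = k"
    and tree: "is_tree (V - S) (del_verts V E S)" and two: "2 \<le> card (V - S)"
    and \<alpha>: "0 < \<alpha>" "\<alpha> < 1"
  shows "(\<Sum>v\<in>V - S. real (degree V E v) powr \<alpha>)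
      \<le> 2 * real (k + 1) powr \<alpha> + (real (card (V - S)) - 2) * real (k + 2) powr \<alpha>"
    and "v \<in> V - S \<Longrightarrow> 3 \<le> degree (V - S) E v \<Longrightarrow> (\<Sum>v\<in>V - S. real (degree V E v) powr \<alpha>)
      < 2 * real (k + 1) powr \<alpha> + (real (card (V - S)) - 2) * real (k + 2) powr \<alpha>"
proof -
  let ?T = "V - S" and ?F = "del_verts V E S"
  define f where "f d = real (d + k) powr \<alpha>" for d
  have GT: "simple_graph ?T ?F" by (rule simple_graph_del_verts[OF G])
  have fin: "finite V" "finite ?T" using simple_graph_finite[OF G] by auto
  have ne: "?T \<noteq> {}" using two by (metis card.empty not_numeral_le_zero)
  have degT: "degree ?T ?F v = degree ?T E v" if "v \<in> ?T" for v
    using that by (simp add: degree_del_verts)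
  have pos: "1 \<le> degree ?T E v" if "v \<in> ?T" for v
    using connected_graph_degree_pos[OF GT _ two that] tree degT[OF that] unfolding is_tree_def by simp
  have degree_sum: "(\<Sum>v\<in>?T. degree ?T E v) \<le> 2 * (card ?T - 1)"
    using acyclic_degree_sum_le[OF fin(2) ne _ simple_graph_no_loop[OF GT]] tree degT
    unfolding is_tree_def by (metis (no_types, lifting) sum.cong)
  have concave: "f (d + 2) - f (d + 1) < f (d + 1) - f d" if "1 \<le> d" for d
    using powr_increment_strict_decreasing[of "real (d + 1 + k)" \<alpha>] that \<alpha> by (simp add: f_def algebra_simps)
  have mono: "f 1 \<le> f 2" using \<alpha> by (simp add: f_def powr_mono2)
  have le: "real (degree V E v) powr \<alpha> \<le> f (degree ?T E v)" for v
  proof -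
    have "degree V E v \<le> degree ?T E v + k" using degree_le_degree_Diff[OF fin(1) assms(2)] assms(3) by simp
    then show ?thesis unfolding f_def using \<alpha> by (intro powr_mono2) simp_all
  qed
  have sum_le: "(\<Sum>v\<in>?T. real (degree V E v) powr \<alpha>) \<le> (\<Sum>v\<in>?T. f (degree ?T E v))"
    using le by (rule sum_mono)
  have f12: "f 1 = real (k + 1) powr \<alpha>" "f 2 = real (k + 2) powr \<alpha>" by (simp_all add: f_def add.commute)
  show "(\<Sum>v\<in>?T. real (degree V E v) powr \<alpha>)
      \<le> 2 * real (k + 1) powr \<alpha> + (real (card ?T) - 2) * real (k + 2) powr \<alpha>"
    using sum_le concave_seq_sum_le(1)[OF concave mono fin(2) ne pos degree_sum] unfolding f12 by linarith
  show "(\<Sum>v\<in>?T. real (degree V E v) powr \<alpha>)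
      < 2 * real (k + 1) powr \<alpha> + (real (card ?T) - 2) * real (k + 2) powr \<alpha>"
    if "v \<in> ?T" "3 \<le> degree ?T E v"
    using sum_le concave_seq_sum_le(2)[OF concave mono fin(2) ne pos degree_sum that] unfolding f12 by linarith
qed

lemma gen_quasi_treeE:
  assumes "gen_quasi_tree k V E"
  obtains S where "simple_graph V E" "S \<subset> V" "card S = k" "is_tree (V - S) (del_verts V E S)"
proof -
  have "simple_graph V E" "\<exists>S. S \<subset> V \<and> card S = k \<and> is_tree (V - S) (del_verts V E S)"
    using assms unfolding gen_quasi_tree_def by simp_all
  then show ?thesis using that by blast
qed

lemma edge_is_tree:
  assumes "a \<noteq> b" "{a, b} \<in> F"
  shows "is_tree {a, b} F"
proof -
  have "(\<lambda>x y. {x, y} \<in> F)\<^sup>*\<^sup>* u v" if "u \<in> {a, b}" "v \<in> {a, b}" for u v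
    using that assms(2) by (auto simp: insert_commute)
  moreover have "\<not> has_cycle {a, b} F"
  proof
    assume "has_cycle {a, b} F"
    then obtain xs where xs: "3 \<le> length xs" "distinct xs" "set xs \<subseteq> {a, b}"
      unfolding has_cycle_def by blast
    have "length xs = card (set xs)" using xs(2) by (simp add: distinct_card)
    also have "\<dots> \<le> card {a, b}" using xs(3) by (intro card_mono) auto
    also have "\<dots> \<le> 2" by (simp add: card_insert_if)
    finally show False using xs(1) by simp
  qed
  ultimately show ?thesis unfolding is_tree_def connected_graph_def by blast
qed

lemma gen_quasi_tree_card_ge:
  assumes "gen_quasi_tree k V E" "3 \<le> card V"
  shows "k + 2 \<le> card V"
proof -
  have G: "simple_graph V E" "connected_graph V E"
    and minimal: "\<forall>S'. S' \<subset> V \<and> card S' = k - 1 \<longrightarrow> \<not> is_tree (V - S') (del_verts V E S')"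
    using assms(1) unfolding gen_quasi_tree_def by simp_all
  obtain S where S: "S \<subset> V" "card S = k" by (rule gen_quasi_treeE[OF assms(1)])
  have fin: "finite V" by (rule simple_graph_finite[OF G(1)])
  have "k < card V" using psubset_card_mono[OF fin S(1)] S(2) by simp
  have "\<not> card V \<le> Suc 0" using assms(2) by simp
  then obtain a b where ab: "a \<in> V" "b \<in> V" "a \<noteq> b"
    using card_le_Suc0_iff_eq[OF fin] by blast
  obtain w where w: "w \<in> V" "{a, w} \<in> E" using connected_graph_has_neighbour[OF G ab(1,2)] ab(3) by metis
  have "a \<noteq> w" using simple_graph_edgeD[OF G(1) w(2)] by simp
  let ?S' = "V - {a, w}"
  have "V - ?S' = {a, w}" "{a, w} \<in> del_verts V E ?S'"
    using ab(1) w unfolding del_verts_def by auto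
  then have "is_tree (V - ?S') (del_verts V E ?S')" using edge_is_tree[OF \<open>a \<noteq> w\<close>] by simp
  moreover have "?S' \<subset> V" using ab(1) by blast
  moreover have "card ?S' = card V - 2" using ab(1) w(1) \<open>a \<noteq> w\<close> fin by (simp add: card_Diff_subset)
  ultimately have "card V - 2 \<noteq> k - 1" using minimal by metis
  then show ?thesis using \<open>k < card V\<close> assms(2) by linarith
qed

lemma deletion_tree_clique_join_path_iso:
  assumes G: "simple_graph V E" and S: "S \<subseteq> V" "card S = k"
    and tree: "is_tree (V - S) (del_verts V E S)"
    and full: "\<And>s. s \<in> S \<Longrightarrow> degree V E s = card V - 1"
    and path: "\<And>v. v \<in> V - S \<Longrightarrow> degree (V - S) E v \<le> 2"
  shows "graph_iso V E (clique_join_path k (card (V - S)))"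
proof -
  obtain xs where xs: "distinct xs" "set xs = V - S"
    and adj: "\<And>i j. i < length xs \<Longrightarrow> j < length xs \<Longrightarrow>
      {xs ! i, xs ! j} \<in> del_verts V E S \<longleftrightarrow> i = Suc j \<or> j = Suc i"
    using tree_max_degree_two_path[OF simple_graph_del_verts[OF G] tree] path
    by (metis DiffD2 degree_del_verts)
  have "{xs ! i, xs ! j} \<in> E \<longleftrightarrow> i = Suc j \<or> j = Suc i" if "i < length xs" "j < length xs" for i j
  proof -
    have "xs ! i \<notin> S" "xs ! j \<notin> S" using xs(2) that nth_mem by blast+
    then show ?thesis using adj[OF that] unfolding del_verts_def by auto
  qed
  moreover have "{u, s} \<in> E" if "s \<in> S" "u \<in> V" "u \<noteq> s" for s u
    using degree_eq_card_imp_adjacent[OF G _ full] S(1) that by blast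
  moreover have "length xs = card (V - S)" using xs by (metis distinct_card)
  ultimately show ?thesis
    using graph_iso_clique_join_path[OF simple_graph_finite[OF G] S xs] simple_graph_no_loop[OF G] by metis
qed

lemma randic0_le_deletion_tree:
  assumes G: "simple_graph V E" and S: "S \<subseteq> V" "card S = k"
    and tree: "is_tree (V - S) (del_verts V E S)" and two: "2 \<le> card (V - S)"
    and \<alpha>: "0 < \<alpha>" "\<alpha> < 1"
  shows "randic0 \<alpha> V E \<le> extremal_randic0 k (card V) \<alpha>"
    and "randic0 \<alpha> V E = extremal_randic0 k (card V) \<alpha> \<Longrightarrow> graph_iso V E (clique_join_path k (card (V - S)))"
proof -
  have fin: "finite V" by (rule simple_graph_finite[OF G])
  have split: "randic0 \<alpha> V E = (\<Sum>s\<in>S. real (degree V E s) powr \<alpha>) + (\<Sum>v\<in>V - S. real (degree V E v) powr \<alpha>)"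
    unfolding randic0_def using sum.subset_diff[OF S(1) fin] by (simp add: add.commute)
  have "k \<le> card V" using card_mono[OF fin S(1)] S(2) by simp
  then have card: "real (card (V - S)) = real (card V) - real k"
    using S fin by (simp add: card_Diff_subset finite_subset of_nat_diff)
  note clique = sum_degree_powr_le[OF G S(1) \<alpha>(1), unfolded S(2)]
  note tree_part = sum_degree_powr_deletion_tree_le[OF G S tree two \<alpha>, unfolded card]
  show "randic0 \<alpha> V E \<le> extremal_randic0 k (card V) \<alpha>"
    using split clique(1) tree_part(1) unfolding extremal_randic0_def by linarith
  assume "randic0 \<alpha> V E = extremal_randic0 k (card V) \<alpha>"
  then have tight: "(\<Sum>s\<in>S. real (degree V E s) powr \<alpha>) = real k * real (card V - 1) powr \<alpha>"
    "(\<Sum>v\<in>V - S. real (degree V E v) powr \<alpha>)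
      = 2 * real (k + 1) powr \<alpha> + (real (card V) - real k - 2) * real (k + 2) powr \<alpha>"
    using split clique(1) tree_part(1) unfolding extremal_randic0_def by linarith+
  show "graph_iso V E (clique_join_path k (card (V - S)))"
  proof (rule deletion_tree_clique_join_path_iso[OF G S tree])
    show "degree V E s = card V - 1" if "s \<in> S" for s
      using clique(2)[OF that] tight(1) degree_le_card[OF G] S(1) that by fastforce
    show "degree (V - S) E v \<le> 2" if "v \<in> V - S" for v
      using tree_part(2)[OF that] tight(2) by fastforce
  qed
qed

theorem mainTheorem5:
  fixes V :: "'a set" and E :: "'a set set" and k n :: nat and \<alpha> :: real
  assumes "k \<ge> 1" and "n \<ge> 3" and "0 < \<alpha>" and "\<alpha> < 1"
    and "card V = n" and "gen_quasi_tree k V E"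
  shows "randic0 \<alpha> V E \<le> real k * real (n - 1) powr \<alpha> + 2 * real (k + 1) powr \<alpha>
            + (real n - real k - 2) * real (k + 2) powr \<alpha>
       \<and> (randic0 \<alpha> V E = real k * real (n - 1) powr \<alpha> + 2 * real (k + 1) powr \<alpha>
            + (real n - real k - 2) * real (k + 2) powr \<alpha>
          \<longleftrightarrow> graph_iso V E (graph_join (complete_graph k) (path_graph (n - k))))"
proof -
  obtain S where G: "simple_graph V E" and S: "S \<subset> V" "card S = k"
    and tree: "is_tree (V - S) (del_verts V E S)"
    by (rule gen_quasi_treeE[OF assms(6)])
  have "S \<subseteq> V" "finite V" using S(1) simple_graph_finite[OF G] by auto
  then have "card (V - S) = n - k" using S(2) assms(5) by (simp add: card_Diff_subset finite_subset)
  moreover have "k + 2 \<le> n" using gen_quasi_tree_card_ge[OF assms(6)] assms(2,5) by simp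
  ultimately have two: "2 \<le> card (V - S)" by simp
  note bound = randic0_le_deletion_tree[OF G \<open>S \<subseteq> V\<close> S(2) tree two assms(3,4)]
  have "randic0 \<alpha> V E = extremal_randic0 k n \<alpha>" if "graph_iso V E (clique_join_path k (n - k))"
    using randic0_graph_iso[OF that] randic0_clique_join_path[OF assms(1), of "n - k"] two
      \<open>card (V - S) = n - k\<close> \<open>k + 2 \<le> n\<close> by simp
  then show ?thesis using bound \<open>card (V - S) = n - k\<close> assms(5) unfolding extremal_randic0_def by auto
qed

end
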